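(* Let $A\in\mathcal{B}(\Omega)$ with $c(A)>0$ and let $X\in\mathbb{L}^1(\Omega)$ satisfy $0\le XI_A\le M$ for a constant $M>0$. Then for each $\delta>0$, $\hat{\mathbb{E}}[(X+\delta)I_A]>\hat{\mathbb{E}}[XI_A]$.
   Context: $\Omega=C_0^d(\mathbb{R}^+)$ is the space of continuous paths from $[0,\infty)$ to $\mathbb{R}^d$ starting at $0$. $\mathcal{P}$ is a (weakly compact) set of probability measures on $(\Omega,\mathcal{B}(\Omega))$ representing the $G$-expectation. For $X\in L^0(\Omega)$ (Borel maps into $[-\infty,\infty]$) with $E_P[X]$ defined for all $P\in\mathcal{P}$, $\hat{\mathbb{E}}[X]:=\sup_{P\in\mathcal{P}}E_P[X]$; $c(A)=\sup_{P\in\mathcal{P}}P(A)$; $\mathbb{L}^1(\Omega)=\{X\in L^0(\Omega):\hat{\mathbb{E}}[|X|]<\infty\}$. *)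

theory Defs
  imports "HOL-Probability.Probability"
begin

text \<open>The path space Omega = C_0^d(R^+): continuous paths [0,oo) -> R^d starting at 0.
  A path is represented as a function on real, normalised to 0 for negative times.\<close>

definition Omega :: "(real \<Rightarrow> real ^ 'd::finite) set" where
  "Omega = {\<omega>. continuous_on {0..} \<omega> \<and> \<omega> 0 = 0 \<and> (\<forall>t<0. \<omega> t = 0)}"

definition path_dist :: "(real \<Rightarrow> real ^ 'd::finite) \<Rightarrow> (real \<Rightarrow> real ^ 'd::finite) \<Rightarrow> real" where
  "path_dist \<omega> \<omega>' =
     (\<Sum>n. (1/2) ^ (Suc n) * min 1 (SUP t\<in>{0..real n}. norm (\<omega> t - \<omega>' t)))"

definition path_open :: "(real \<Rightarrow> real ^ 'd::finite) set \<Rightarrow> bool" where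
  "path_open U \<longleftrightarrow> U \<subseteq> Omega \<and>
     (\<forall>\<omega>\<in>U. \<exists>e>0. \<forall>\<omega>'\<in>Omega. path_dist \<omega> \<omega>' < e \<longrightarrow> \<omega>' \<in> U)"

definition PathSpace :: "(real \<Rightarrow> real ^ 'd::finite) measure" where
  "PathSpace = sigma Omega {U. path_open U}"

definition path_bounded_continuous :: "((real \<Rightarrow> real ^ 'd::finite) \<Rightarrow> real) \<Rightarrow> bool" where
  "path_bounded_continuous f \<longleftrightarrow>
     (\<exists>B. \<forall>\<omega>\<in>Omega. \<bar>f \<omega>\<bar> \<le> B) \<and>
     (\<forall>\<omega>\<in>Omega. \<forall>e>0. \<exists>d>0. \<forall>\<omega>'\<in>Omega. path_dist \<omega> \<omega>' < d \<longrightarrow> \<bar>f \<omega>' - f \<omega>\<bar> < e)"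

definition weak_conv_path ::
  "(nat \<Rightarrow> (real \<Rightarrow> real ^ 'd::finite) measure) \<Rightarrow> (real \<Rightarrow> real ^ 'd::finite) measure \<Rightarrow> bool" where
  "weak_conv_path Ps P \<longleftrightarrow>
     (\<forall>f. path_bounded_continuous f \<longrightarrow>
        (\<lambda>n. \<integral>\<omega>. f \<omega> \<partial>(Ps n)) \<longlonglongrightarrow> (\<integral>\<omega>. f \<omega> \<partial>P))"

definition prob_on_path :: "(real \<Rightarrow> real ^ 'd::finite) measure \<Rightarrow> bool" where
  "prob_on_path P \<longleftrightarrow> prob_space P \<and> sets P = sets PathSpace"

text \<open>Weak compactness (sequential form; the weak topology on probability measures on the
  Polish space Omega is metrisable, so this is equivalent to compactness).\<close>

definition weakly_compact :: "(real \<Rightarrow> real ^ 'd::finite) measure set \<Rightarrow> bool" where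
  "weakly_compact \<P> \<longleftrightarrow>
     (\<forall>Ps. (\<forall>n::nat. Ps n \<in> \<P>) \<longrightarrow>
        (\<exists>r P. strict_mono r \<and> P \<in> \<P> \<and> weak_conv_path (Ps \<circ> r) P))"

definition Ex :: "'a measure \<Rightarrow> ('a \<Rightarrow> ereal) \<Rightarrow> ereal" where
  "Ex P X = enn2ereal (\<integral>\<^sup>+ \<omega>. e2ennreal (X \<omega>) \<partial>P) - enn2ereal (\<integral>\<^sup>+ \<omega>. e2ennreal (- X \<omega>) \<partial>P)"

definition Ex_defined :: "'a measure \<Rightarrow> ('a \<Rightarrow> ereal) \<Rightarrow> bool" where
  "Ex_defined P X \<longleftrightarrow> (\<integral>\<^sup>+ \<omega>. e2ennreal (X \<omega>) \<partial>P) < \<infinity> \<or> (\<integral>\<^sup>+ \<omega>. e2ennreal (- X \<omega>) \<partial>P) < \<infinity>"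

definition hatE :: "'a measure set \<Rightarrow> ('a \<Rightarrow> ereal) \<Rightarrow> ereal" where
  "hatE \<P> X = (SUP P\<in>\<P>. Ex P X)"

definition cap :: "'a measure set \<Rightarrow> 'a set \<Rightarrow> ennreal" where
  "cap \<P> A = (SUP P\<in>\<P>. emeasure P A)"

definition L1 :: "'a measure \<Rightarrow> 'a measure set \<Rightarrow> ('a \<Rightarrow> ereal) set" where
  "L1 M \<P> = {X. X \<in> borel_measurable M \<and> (\<forall>P\<in>\<P>. Ex_defined P (\<lambda>\<omega>. \<bar>X \<omega>\<bar>))
                 \<and> hatE \<P> (\<lambda>\<omega>. \<bar>X \<omega>\<bar>) < \<infinity>}"

end

theory Submission
  imports Defs
begin

text \<open>For each P the two expectations are real numbers e P and e P + \<delta> P(A) with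
  0 \<le> e P \<le> M P(A) \<le> M. Hence e P + \<delta> P(A) \<ge> (1 + \<delta>/M) e P, so the supremum of the shifted
  expectations is at least (1 + \<delta>/M) times the finite supremum r of the e P; this is strictly
  larger than r unless r = 0, and in that case the shifted supremum is still at least
  \<delta> P(A) > 0 for a P charging A, which exists because c(A) > 0.\<close>

lemma SUP_ereal_less_SUP_shifted:
  fixes e g :: "'a \<Rightarrow> real" and M \<delta> :: real
  assumes e_nonneg: "\<And>i. i \<in> I \<Longrightarrow> 0 \<le> e i"
    and e_le: "\<And>i. i \<in> I \<Longrightarrow> e i \<le> M * g i"
    and g_le_1: "\<And>i. i \<in> I \<Longrightarrow> g i \<le> 1"
    and i0: "i0 \<in> I" "0 < g i0"
    and "0 < M" "0 < \<delta>"
  shows "(SUP i\<in>I. ereal (e i)) < (SUP i\<in>I. ereal (e i + \<delta> * g i))"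
proof (rule ccontr)
  assume "\<not> ?thesis"
  then have shifted_le: "(SUP i\<in>I. ereal (e i + \<delta> * g i)) \<le> (SUP i\<in>I. ereal (e i))"
    by simp
  have "(SUP i\<in>I. ereal (e i)) \<le> ereal M"
  proof (rule SUP_least)
    fix i assume "i \<in> I"
    then show "ereal (e i) \<le> ereal M"
      using e_le[of i] g_le_1[of i] \<open>0 < M\<close> by (simp add: mult_left_le order_trans)
  qed
  moreover have "ereal (e i0) \<le> (SUP i\<in>I. ereal (e i))"
    using i0(1) by (rule SUP_upper)
  ultimately obtain r where r: "(SUP i\<in>I. ereal (e i)) = ereal r" and "0 \<le> r"
    using e_nonneg[OF i0(1)] by (cases "SUP i\<in>I. ereal (e i)") auto
  have shifted_le_r: "e i + \<delta> * g i \<le> r" if "i \<in> I" for i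
  proof -
    have "ereal (e i + \<delta> * g i) \<le> (SUP i\<in>I. ereal (e i + \<delta> * g i))"
      using that by (rule SUP_upper)
    then have "ereal (e i + \<delta> * g i) \<le> ereal r"
      using shifted_le unfolding r by (rule order_trans)
    then show ?thesis by simp
  qed
  have "e i \<le> r * M / (M + \<delta>)" if "i \<in> I" for i
  proof -
    have "e i * \<delta> \<le> M * g i * \<delta>" using e_le[OF that] \<open>0 < \<delta>\<close> by simp
    moreover have "M * (e i + \<delta> * g i) \<le> M * r"
      using shifted_le_r[OF that] \<open>0 < M\<close> by (intro mult_left_mono) auto
    ultimately have "e i * (M + \<delta>) \<le> r * M" by (simp add: algebra_simps)
    then show ?thesis using \<open>0 < M\<close> \<open>0 < \<delta>\<close> by (simp add: field_simps)
  qed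
  then have "(SUP i\<in>I. ereal (e i)) \<le> ereal (r * M / (M + \<delta>))"
    by (intro SUP_least) simp
  then have "r * (M + \<delta>) \<le> r * M"
    using r \<open>0 < M\<close> \<open>0 < \<delta>\<close> by (simp add: field_simps)
  then have "r = 0"
    using \<open>0 \<le> r\<close> \<open>0 < \<delta>\<close> by (simp add: algebra_simps mult_le_0_iff)
  then show False
    using shifted_le_r[OF i0(1)] e_nonneg[OF i0(1)] mult_pos_pos[OF \<open>0 < \<delta>\<close> i0(2)] by simp
qed

lemma Ex_cong:
  assumes "\<And>\<omega>. \<omega> \<in> space P \<Longrightarrow> X \<omega> = Y \<omega>"
  shows "Ex P X = Ex P Y"
  unfolding Ex_def using assms by (simp cong: nn_integral_cong)

lemma (in prob_space) Ex_eq_integral: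
  assumes f: "f \<in> borel_measurable M"
    and bounds: "\<And>\<omega>. \<omega> \<in> space M \<Longrightarrow> 0 \<le> f \<omega> \<and> f \<omega> \<le> B"
  shows "Ex M (\<lambda>\<omega>. ereal (f \<omega>)) = ereal (\<integral>\<omega>. f \<omega> \<partial>M)"
proof -
  have "integrable M f"
    using bounds f by (intro integrable_const_bound[where B=B]) (auto intro!: AE_I2)
  then have "(\<integral>\<^sup>+ \<omega>. ennreal (f \<omega>) \<partial>M) = ennreal (\<integral>\<omega>. f \<omega> \<partial>M)"
    using bounds by (intro nn_integral_eq_integral) (auto intro!: AE_I2)
  moreover have "(\<integral>\<^sup>+ \<omega>. e2ennreal (- ereal (f \<omega>)) \<partial>M) = 0"
    using bounds by (subst nn_integral_cong[where v="\<lambda>_. 0"]) (auto simp: ennreal_neg)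
  moreover have "0 \<le> (\<integral>\<omega>. f \<omega> \<partial>M)"
    using bounds by (intro integral_nonneg_AE) (auto intro!: AE_I2)
  ultimately show ?thesis
    unfolding Ex_def by (simp add: zero_ennreal.rep_eq)
qed

lemma times_indicator_eq_ereal:
  fixes x :: ereal
  assumes "0 \<le> x * indicator A \<omega>" "x * indicator A \<omega> \<le> ereal M"
  shows "x * indicator A \<omega> = ereal (real_of_ereal (x * indicator A \<omega>))"
    and "(x + ereal \<delta>) * indicator A \<omega>
           = ereal (real_of_ereal (x * indicator A \<omega>) + \<delta> * indicator A \<omega>)"
  using assms by (cases "\<omega> \<in> A"; cases x; simp)+

lemma (in prob_space) Ex_shift_on_set:
  fixes X :: "'a \<Rightarrow> ereal"
  assumes A: "A \<in> events" and X: "X \<in> borel_measurable M"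
    and bounds: "\<And>\<omega>. \<omega> \<in> space M \<Longrightarrow> 0 \<le> X \<omega> * indicator A \<omega> \<and> X \<omega> * indicator A \<omega> \<le> ereal B"
    and "0 \<le> B" "0 \<le> \<delta>"
  defines "e \<equiv> \<integral>\<omega>. real_of_ereal (X \<omega> * indicator A \<omega>) \<partial>M"
  shows "Ex M (\<lambda>\<omega>. X \<omega> * indicator A \<omega>) = ereal e"
    and "Ex M (\<lambda>\<omega>. (X \<omega> + ereal \<delta>) * indicator A \<omega>) = ereal (e + \<delta> * prob A)"
    and "0 \<le> e" and "e \<le> B * prob A"
proof -
  define z where "z \<omega> = real_of_ereal (X \<omega> * indicator A \<omega>)" for \<omega>
  have e: "e = (\<integral>\<omega>. z \<omega> \<partial>M)"
    unfolding e_def z_def ..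
  have z: "z \<in> borel_measurable M"
    unfolding z_def using X A by measurable
  have z_bounds: "0 \<le> z \<omega> \<and> z \<omega> \<le> B * indicator A \<omega>" if "\<omega> \<in> space M" for \<omega>
    using bounds[OF that] unfolding z_def
    by (cases "\<omega> \<in> A"; cases "X \<omega>") auto
  have z_le_B: "z \<omega> \<le> B" if "\<omega> \<in> space M" for \<omega>
    using z_bounds[OF that] \<open>0 \<le> B\<close> by (cases "\<omega> \<in> A") auto
  have integrable_z: "integrable M z"
    using z z_bounds z_le_B by (intro integrable_const_bound[where B=B]) (auto intro!: AE_I2)
  have "Ex M (\<lambda>\<omega>. X \<omega> * indicator A \<omega>) = Ex M (\<lambda>\<omega>. ereal (z \<omega>))"
    using bounds unfolding z_def by (intro Ex_cong) (metis times_indicator_eq_ereal(1))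
  also have "\<dots> = ereal e"
    unfolding e using z z_bounds z_le_B by (intro Ex_eq_integral[where B=B]) auto
  finally show "Ex M (\<lambda>\<omega>. X \<omega> * indicator A \<omega>) = ereal e" .
  have "Ex M (\<lambda>\<omega>. (X \<omega> + ereal \<delta>) * indicator A \<omega>) = Ex M (\<lambda>\<omega>. ereal (z \<omega> + \<delta> * indicator A \<omega>))"
    using bounds unfolding z_def by (intro Ex_cong) (metis times_indicator_eq_ereal(2))
  also have "\<dots> = ereal (\<integral>\<omega>. z \<omega> + \<delta> * indicator A \<omega> \<partial>M)"
    using z A z_bounds z_le_B \<open>0 \<le> B\<close> \<open>0 \<le> \<delta>\<close>
    by (intro Ex_eq_integral[where B="B + \<delta>"]) (auto split: split_indicator intro: add_increasing2)
  also have "(\<integral>\<omega>. z \<omega> + \<delta> * indicator A \<omega> \<partial>M) = e + \<delta> * prob A"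
    unfolding e using integrable_z A by (simp add: emeasure_eq_measure)
  finally show "Ex M (\<lambda>\<omega>. (X \<omega> + ereal \<delta>) * indicator A \<omega>) = ereal (e + \<delta> * prob A)" .
  show "0 \<le> e"
    unfolding e using z_bounds by (intro integral_nonneg_AE) (auto intro!: AE_I2)
  have "e \<le> (\<integral>\<omega>. B * indicator A \<omega> \<partial>M)"
    unfolding e using z_bounds integrable_z A
    by (intro integral_mono_AE) (auto intro!: AE_I2 simp: emeasure_eq_measure)
  then show "e \<le> B * prob A"
    using A by simp
qed

lemma space_prob_on_path:
  assumes "prob_on_path P"
  shows "space P = Omega"
proof -
  have "sets P = sets (sigma Omega {U. path_open U})"
    using assms unfolding prob_on_path_def PathSpace_def by simp
  then show ?thesis
    by (simp add: sets_eq_imp_space_eq space_measure_of_conv)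
qed

theorem proposition3p6:
  fixes \<P> :: "(real \<Rightarrow> real ^ 'd) measure set"
    and A :: "(real \<Rightarrow> real ^ 'd) set"
    and X :: "(real \<Rightarrow> real ^ 'd) \<Rightarrow> ereal"
    and M :: real and \<delta> :: real
  assumes "\<forall>P\<in>\<P>. prob_on_path P"
    and "weakly_compact \<P>"
    and "A \<in> sets PathSpace"
    and "cap \<P> A > 0"
    and "X \<in> L1 PathSpace \<P>"
    and "M > 0"
    and "\<forall>\<omega>\<in>Omega. 0 \<le> X \<omega> * indicator A \<omega> \<and> X \<omega> * indicator A \<omega> \<le> ereal M"
    and "\<delta> > 0"
  shows "hatE \<P> (\<lambda>\<omega>. (X \<omega> + ereal \<delta>) * indicator A \<omega>) > hatE \<P> (\<lambda>\<omega>. X \<omega> * indicator A \<omega>)"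
proof -
  define e where "e P = (\<integral>\<omega>. real_of_ereal (X \<omega> * indicator A \<omega>) \<partial>P)" for P
  have P: "prob_space P" "sets P = sets PathSpace" "space P = Omega" if "P \<in> \<P>" for P
    using assms(1) that space_prob_on_path unfolding prob_on_path_def by blast+
  have shift: "Ex P (\<lambda>\<omega>. X \<omega> * indicator A \<omega>) = ereal (e P)"
    "Ex P (\<lambda>\<omega>. (X \<omega> + ereal \<delta>) * indicator A \<omega>) = ereal (e P + \<delta> * measure P A)"
    "0 \<le> e P" "e P \<le> M * measure P A" if "P \<in> \<P>" for P
    using prob_space.Ex_shift_on_set[OF P(1)[OF that], of A X M \<delta>] P[OF that] assms(3,5-8)
    unfolding e_def by (auto simp: L1_def cong: measurable_cong_sets)
  obtain P0 where "P0 \<in> \<P>" "0 < emeasure P0 A"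
    using assms(4) by (auto simp: cap_def less_SUP_iff)
  then have "0 < measure P0 A"
    using finite_measure.emeasure_eq_measure[OF prob_space.finite_measure[OF P(1)[OF \<open>P0 \<in> \<P>\<close>]]]
    by simp
  then have "(SUP P\<in>\<P>. ereal (e P)) < (SUP P\<in>\<P>. ereal (e P + \<delta> * measure P A))"
    using shift \<open>P0 \<in> \<P>\<close> assms(6,8) P(1)
    by (intro SUP_ereal_less_SUP_shifted[where M=M and ?i0.0=P0]) (auto intro: prob_space.prob_le_1)
  then show ?thesis
    unfolding hatE_def using shift by (simp cong: SUP_cong)
qed

end
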